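(* Consider the following setting. Fix a target toxicity probability $\phi\in(0,1)$ and constants $\delta_1,\delta_2>0$. Let the target key be $\mathcal I^*=(\phi-\delta_1,\phi+\delta_2)$, and let $\mathcal I_1,\dots,\mathcal I_K$ be the intervals ("keys") of common width $\delta_1+\delta_2$ obtained by successively adjoining adjacent intervals of this width to both sides of $\mathcal I^*$ as long as they stay within $[0,1]$, ordered from left to right, with $\mathcal I_{k^*}=\mathcal I^*$. At a given dose level $j$ with toxicity probability $p_j$, $n_j$ patients have been treated. For each patient $i$, $\delta_i\in\{0,1\}$ indicates whether the binary toxicity outcome $x_i$ has been ascertained, and each patient with $\delta_i=0$ (pending) has not experienced toxicity so far and carries a weight $w_i\in[0,1]$. Let $\tilde y_j=\sum_i\delta_ix_i$ (number of observed toxicities), $m_j=\sum_i\delta_i(1-x_i)$, and $\tilde m_j=m_j+\sum_i(1-\delta_i)w_i$. For nonnegative numbers $(y,m)$, define the decision $a(y,m)\in\{-1,0,1\}$ as follows: with $p_j$ having posterior distribution $\mathrm{Beta}(y+1,m+1)$ (i.e. uniform prior and binomial-type likelihood $p_j^{y}(1-p_j)^{m}$), let $k_s=\arg\max_{k=1,\dots,K}\Pr(p_j\in\mathcal I_k)$; set $a=1$ (escalate) if $k_s<k^*$, $a=0$ (stay) if $k_s=k^*$, and $a=-1$ (de-escalate) if $k_s>k^*$. The TITE-keyboard decision based on the observed interim data is $a(D_j^o)=a(\tilde y_j,\tilde m_j)$, and the decision based on the "cross-sectional" data $D_j^s=(n_j,\tilde y_j)$, which treats every pending patient as a non-toxicity,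 is $a(D_j^s)=a(\tilde y_j,n_j-\tilde y_j)$. Then the TITE-keyboard design is monotonic: $a(D_j^o)\le a(D_j^s)$ for every dose level $j$.
   Context: The weight $w_i$ represents $\Pr(t_i\le u_i\mid x_i=1)$, where $t_i$ is the time to toxicity and $u_i$ the patient's follow-up time so far, so $w_i\in[0,1]$. A dose-finding design is called monotonic if $a(D_j^o)\le a(D_j^s)$ for all $j$, where $a(\cdot)=-1,0,1$ denote de-escalation, staying at the current dose, and escalation. *)

theory Defs
  imports "HOL-Analysis.Analysis"
begin

text \<open>Keys are indexed by an integer offset k relative to the target key:
  key k = (phi - d1 + k*(d1+d2), phi + d2 + k*(d1+d2)); the target key has offset 0.
  Offsets increase from left to right.\<close>

definition key_lo :: "real \<Rightarrow> real \<Rightarrow> real \<Rightarrow> int \<Rightarrow> real" where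
  "key_lo phi d1 d2 k = phi - d1 + real_of_int k * (d1 + d2)"

definition key_hi :: "real \<Rightarrow> real \<Rightarrow> real \<Rightarrow> int \<Rightarrow> real" where
  "key_hi phi d1 d2 k = phi + d2 + real_of_int k * (d1 + d2)"

definition keys :: "real \<Rightarrow> real \<Rightarrow> real \<Rightarrow> int set" where
  "keys phi d1 d2 = {k. k = 0 \<or> (0 \<le> key_lo phi d1 d2 k \<and> key_hi phi d1 d2 k \<le> 1)}"

definition beta_post_prob :: "real \<Rightarrow> real \<Rightarrow> real \<Rightarrow> real \<Rightarrow> real" where
  "beta_post_prob y m a b =
     (LINT t:({a<..<b} \<inter> {0..1})|lborel. t powr y * (1 - t) powr m)
     / (LINT t:{0..1}|lborel. t powr y * (1 - t) powr m)"

definition key_prob :: "real \<Rightarrow> real \<Rightarrow> real \<Rightarrow> real \<Rightarrow> real \<Rightarrow> int \<Rightarrow> real" where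
  "key_prob phi d1 d2 y m k = beta_post_prob y m (key_lo phi d1 d2 k) (key_hi phi d1 d2 k)"

definition selected_key :: "real \<Rightarrow> real \<Rightarrow> real \<Rightarrow> real \<Rightarrow> real \<Rightarrow> int" where
  "selected_key phi d1 d2 y m =
     (LEAST k. k \<in> keys phi d1 d2 \<and>
        key_prob phi d1 d2 y m k = Max (key_prob phi d1 d2 y m ` keys phi d1 d2))"

definition keyboard_decision :: "real \<Rightarrow> real \<Rightarrow> real \<Rightarrow> real \<Rightarrow> real \<Rightarrow> int" where
  "keyboard_decision phi d1 d2 y m =
     (let ks = selected_key phi d1 d2 y m in
      if ks < 0 then 1 else if ks = 0 then 0 else -1)"

end

(* Both decisions use the same toxicity count y and differ only in the
   non-toxicity count: the interim count m is at most the cross-sectional count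
   n - y, because a pending patient contributes w_i <= 1 instead of 1.
   Raising m to m' multiplies the posterior kernel t^y (1-t)^m by the
   nonincreasing factor (1-t)^(m'-m).  Compared with the constant factor given
   by its value at a point separating two keys, it raises the mass of the left
   key and lowers that of the right one, so a right key that was not more
   probable than a left key stays so.  Hence the leftmost most probable key
   can only move left, and the decision can only move towards escalation. *)

theory Submission
  imports Defs
begin

lemma set_integral_reweight_le:
  fixes f h :: "'a \<Rightarrow> real"
  assumes "set_integrable M A f" "set_integrable M B f"
    and "set_integrable M A (\<lambda>t. h t * f t)" "set_integrable M B (\<lambda>t. h t * f t)"
    and "\<And>t. t \<in> A \<Longrightarrow> 0 \<le> f t" "\<And>t. t \<in> B \<Longrightarrow> 0 \<le> f t"
    and "0 \<le> \<rho>" "\<And>t. t \<in> A \<Longrightarrow> \<rho> \<le> h t" "\<And>t. t \<in> B \<Longrightarrow> h t \<le> \<rho>"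
    and "(LINT t:B|M. f t) \<le> (LINT t:A|M. f t)"
  shows "(LINT t:B|M. h t * f t) \<le> (LINT t:A|M. h t * f t)"
proof -
  have "(LINT t:B|M. h t * f t) \<le> (LINT t:B|M. \<rho> * f t)"
    by (rule set_integral_mono) (use assms in \<open>auto intro: mult_right_mono\<close>)
  also have "\<dots> = \<rho> * (LINT t:B|M. f t)"
    by simp
  also have "\<dots> \<le> \<rho> * (LINT t:A|M. f t)"
    using assms by (simp add: mult_left_mono)
  also have "\<dots> = (LINT t:A|M. \<rho> * f t)"
    by simp
  also have "\<dots> \<le> (LINT t:A|M. h t * f t)"
    by (rule set_integral_mono) (use assms in \<open>auto intro: mult_right_mono\<close>)
  finally show ?thesis .
qed

lemma Least_finite_linorder:
  fixes R :: "'a::linorder \<Rightarrow> bool"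
  assumes "finite {x. R x}" "R x"
  shows "R (LEAST x. R x)" "(LEAST x. R x) \<le> x"
proof -
  have "(LEAST x. R x) = Min {x. R x}"
    using assms by (blast intro: Least_Min)
  then show "R (LEAST x. R x)" "(LEAST x. R x) \<le> x"
    using assms Min_in[of "{x. R x}"] Min_le[of "{x. R x}"] by auto
qed

lemma Least_argmax_antimono:
  fixes K :: "'a::linorder set" and P Q :: "'a \<Rightarrow> 'b::linorder"
  assumes K: "finite K" "K \<noteq> {}"
    and right_le_left: "\<And>j k. j \<in> K \<Longrightarrow> k \<in> K \<Longrightarrow> j < k \<Longrightarrow> P k \<le> P j \<Longrightarrow> Q k \<le> Q j"
  shows "(LEAST k. k \<in> K \<and> Q k = Max (Q ` K)) \<le> (LEAST k. k \<in> K \<and> P k = Max (P ` K))"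
    (is "?t \<le> ?s")
proof -
  have argmax: "\<exists>k. k \<in> K \<and> R k = Max (R ` K)" for R :: "'a \<Rightarrow> 'b"
  proof -
    have "Max (R ` K) \<in> R ` K"
      using K by (intro Max_in) auto
    then show ?thesis
      by force
  qed
  have finite: "finite {k. k \<in> K \<and> R k = Max (R ` K)}" for R :: "'a \<Rightarrow> 'b"
    using K by simp
  have s: "?s \<in> K" "P ?s = Max (P ` K)" and t: "?t \<in> K" "Q ?t = Max (Q ` K)"
    using Least_finite_linorder(1)[OF finite] argmax by blast+
  show "?t \<le> ?s"
  proof (rule ccontr)
    assume "\<not> ?t \<le> ?s"
    then have "P ?t \<le> P ?s"
      using s t K by simp
    with right_le_left[OF s(1) t(1)] \<open>\<not> ?t \<le> ?s\<close> have "Q ?t \<le> Q ?s"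
      by simp
    then have "Q ?s = Max (Q ` K)"
      using s t K by (simp add: antisym)
    then have "?t \<le> ?s"
      using s(1) by (intro Least_finite_linorder(2)[OF finite]) simp
    with \<open>\<not> ?t \<le> ?s\<close> show False ..
  qed
qed

lemma beta_kernel_set_integrable:
  fixes y m :: real
  assumes "0 \<le> y" "0 \<le> m" "S \<in> sets lborel" "S \<subseteq> {0..1}"
  shows "set_integrable lborel S (\<lambda>t::real. t powr y * (1 - t) powr m)"
proof (rule set_integrable_bound)
  show "set_integrable lborel S (\<lambda>_. 1::real)"
    by (rule set_integrable_subset[of _ "{0..1}"]) (use assms in \<open>auto simp: set_integrable_def\<close>)
  show "set_borel_measurable lborel S (\<lambda>t::real. t powr y * (1 - t) powr m)"
    unfolding set_borel_measurable_def using assms(3) by measurable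
  have "norm (t powr y * (1 - t) powr m) \<le> norm (1::real)" if "t \<in> S" for t
  proof -
    have "t powr y \<le> 1" "(1 - t) powr m \<le> 1"
      using that assms by (auto intro!: powr_le1)
    then show ?thesis
      by (simp add: abs_mult mult_le_one)
  qed
  then show "AE t in lborel. t \<in> S \<longrightarrow> norm (t powr y * (1 - t) powr m) \<le> norm (1::real)"
    by simp
qed

lemma beta_kernel_integral_pos:
  fixes y m :: real
  assumes "0 \<le> y" "0 \<le> m"
  shows "0 < (LINT t:{0..1}|lborel. t powr y * (1 - t) powr m)"
proof -
  define c where "c = (1/4::real) powr y * (1/4) powr m"
  have "0 < c * (1/2)"
    unfolding c_def by simp
  also have "c * (1/2) = (LINT t:{1/4..3/4::real}|lborel. c)"
    by (simp add: set_integral_const)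
  also have "\<dots> = (LINT t:{0..1}|lborel. c * indicator {1/4..3/4::real} t)"
    unfolding set_lebesgue_integral_def
    by (intro Bochner_Integration.integral_cong) (auto simp: indicator_def)
  also have "\<dots> \<le> (LINT t:{0..1}|lborel. t powr y * (1 - t) powr m)"
  proof (rule set_integral_mono)
    have integrable: "integrable lborel (indicat_real {1/4..3/4::real})"
      by (intro integrable_real_indicator emeasure_bounded_finite) auto
    have restrict: "(\<lambda>t. indicator {0..1} t *\<^sub>R indicat_real {1/4..3/4::real} t)
        = indicator {1/4..3/4::real}"
      by (auto simp: indicator_def)
    have "set_integrable lborel {0..1::real} (indicat_real {1/4..3/4})"
      unfolding set_integrable_def restrict by (rule integrable)
    then show "set_integrable lborel {0..1::real} (\<lambda>t. c * indicator {1/4..3/4::real} t)"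
      by simp
    show "set_integrable lborel {0..1} (\<lambda>t::real. t powr y * (1 - t) powr m)"
      using assms by (intro beta_kernel_set_integrable) auto
    show "c * indicator {1/4..3/4::real} t \<le> t powr y * (1 - t) powr m" if "t \<in> {0..1}" for t :: real
    proof (cases "t \<in> {1/4..3/4::real}")
      case True
      then have "(1/4) powr y \<le> t powr y" "(1/4) powr m \<le> (1 - t) powr m"
        using assms by (auto intro!: powr_mono2)
      then show ?thesis
        using True unfolding c_def by (auto intro!: mult_mono)
    qed (use that in simp)
  qed
  finally show ?thesis .
qed

lemma beta_post_prob_right_le_left_mono:
  fixes y m m' a b c e :: real
  assumes "0 \<le> y" "0 \<le> m" "m \<le> m'" "b \<le> c"
    and "beta_post_prob y m c e \<le> beta_post_prob y m a b"
  shows "beta_post_prob y m' c e \<le> beta_post_prob y m' a b"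
proof -
  define A where "A = {a<..<b} \<inter> {0..1::real}"
  define B where "B = {c<..<e} \<inter> {0..1::real}"
  define f where "f t = t powr y * (1 - t) powr m" for t :: real
  define h where "h t = (1 - t) powr (m' - m)" for t :: real
  define \<beta> where "\<beta> = min 1 (max 0 b)"
  have hf: "(\<lambda>t. h t * f t) = (\<lambda>t. t powr y * (1 - t) powr m')"
    by (auto simp: h_def f_def powr_add[symmetric])
  have sets: "A \<in> sets lborel" "A \<subseteq> {0..1}" "B \<in> sets lborel" "B \<subseteq> {0..1}"
    by (auto simp: A_def B_def)
  have "(LINT t:B|lborel. f t) \<le> (LINT t:A|lborel. f t)"
    using assms(5) beta_kernel_integral_pos[OF assms(1,2)]
    unfolding beta_post_prob_def A_def B_def f_def by (simp add: divide_le_cancel)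
  then have "(LINT t:B|lborel. h t * f t) \<le> (LINT t:A|lborel. h t * f t)"
  proof (rule set_integral_reweight_le[where \<rho> = "h \<beta>", rotated -1])
    show "set_integrable lborel A f" "set_integrable lborel B f"
      unfolding f_def using assms sets by (auto intro!: beta_kernel_set_integrable)
    show "set_integrable lborel A (\<lambda>t. h t * f t)" "set_integrable lborel B (\<lambda>t. h t * f t)"
      unfolding hf using assms sets by (auto intro!: beta_kernel_set_integrable)
    show "h \<beta> \<le> h t" if "t \<in> A" for t
      using that assms unfolding h_def \<beta>_def A_def by (auto intro!: powr_mono2)
    show "h t \<le> h \<beta>" if "t \<in> B" for t
      using that assms unfolding h_def \<beta>_def B_def by (auto intro!: powr_mono2)
  qed (auto simp: f_def h_def)
  then show ?thesis
    using beta_kernel_integral_pos[of y m'] assms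
    unfolding beta_post_prob_def A_def B_def hf by (simp add: divide_right_mono)
qed

lemma finite_keys:
  assumes "0 < d1 + d2"
  shows "finite (keys phi d1 d2)"
proof -
  let ?D = "d1 + d2"
  have "keys phi d1 d2 \<subseteq> insert 0 {\<lfloor>(d1 - phi) / ?D\<rfloor> .. \<lceil>(1 - phi - d2) / ?D\<rceil>}"
  proof
    fix k assume k: "k \<in> keys phi d1 d2"
    show "k \<in> insert 0 {\<lfloor>(d1 - phi) / ?D\<rfloor> .. \<lceil>(1 - phi - d2) / ?D\<rceil>}"
    proof (cases "k = 0")
      case False
      then have "0 \<le> key_lo phi d1 d2 k" "key_hi phi d1 d2 k \<le> 1"
        using k by (auto simp: keys_def)
      then have "(d1 - phi) / ?D \<le> of_int k" "of_int k \<le> (1 - phi - d2) / ?D"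
        using assms unfolding key_lo_def key_hi_def
        by (simp_all add: divide_le_eq le_divide_eq algebra_simps)
      then show ?thesis
        by (simp add: floor_le_iff le_ceiling_iff)
    qed simp
  qed
  then show ?thesis
    by (rule finite_subset) simp
qed

lemma key_hi_le_key_lo:
  assumes "0 \<le> d1 + d2" "j < k"
  shows "key_hi phi d1 d2 j \<le> key_lo phi d1 d2 k"
proof -
  have "0 \<le> (real_of_int k - real_of_int j - 1) * (d1 + d2)"
    using assms by simp
  then show ?thesis
    unfolding key_hi_def key_lo_def by (simp add: algebra_simps)
qed

lemma selected_key_antimono:
  assumes "0 < d1 + d2" "0 \<le> y" "0 \<le> m" "m \<le> m'"
  shows "selected_key phi d1 d2 y m' \<le> selected_key phi d1 d2 y m"
  unfolding selected_key_def
proof (rule Least_argmax_antimono)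
  show "finite (keys phi d1 d2)"
    using assms(1) by (rule finite_keys)
  show "keys phi d1 d2 \<noteq> {}"
    by (auto simp: keys_def)
  fix j k :: int
  assume "j < k" "key_prob phi d1 d2 y m k \<le> key_prob phi d1 d2 y m j"
  then show "key_prob phi d1 d2 y m' k \<le> key_prob phi d1 d2 y m' j"
    unfolding key_prob_def using assms key_hi_le_key_lo[of d1 d2 j k phi]
    by (auto intro: beta_post_prob_right_le_left_mono)
qed

lemma keyboard_decision_mono:
  assumes "0 < d1 + d2" "0 \<le> y" "0 \<le> m" "m \<le> m'"
  shows "keyboard_decision phi d1 d2 y m \<le> keyboard_decision phi d1 d2 y m'"
  using selected_key_antimono[OF assms, of phi]
  unfolding keyboard_decision_def Let_def by auto

theorem theorem2:
  fixes phi d1 d2 :: real and n :: nat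
    and obs :: "nat \<Rightarrow> bool" and x w :: "nat \<Rightarrow> real"
  assumes "0 < phi" "phi < 1" "0 < d1" "0 < d2"
    and "\<forall>i<n. x i \<in> {0, 1}"
    and "\<forall>i<n. \<not> obs i \<longrightarrow> 0 \<le> w i \<and> w i \<le> 1"
  shows "keyboard_decision phi d1 d2
           (\<Sum>i<n. if obs i then x i else 0)
           ((\<Sum>i<n. if obs i then 1 - x i else 0) + (\<Sum>i<n. if obs i then 0 else w i))
         \<le> keyboard_decision phi d1 d2
           (\<Sum>i<n. if obs i then x i else 0)
           (real n - (\<Sum>i<n. if obs i then x i else 0))"
proof -
  have interim: "(\<Sum>i<n. if obs i then 1 - x i else 0) + (\<Sum>i<n. if obs i then 0 else w i)
      = (\<Sum>i<n. if obs i then 1 - x i else w i)"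
    unfolding sum.distrib[symmetric] by (intro sum.cong) auto
  have cross_sectional: "real n - (\<Sum>i<n. if obs i then x i else 0)
      = (\<Sum>i<n. if obs i then 1 - x i else 1)"
  proof -
    have "(\<Sum>i<n. if obs i then 1 - x i else 1) = (\<Sum>i<n. 1 - (if obs i then x i else 0))"
      by (intro sum.cong) auto
    then show ?thesis
      by (simp add: sum_subtractf)
  qed
  show ?thesis
    unfolding interim cross_sectional
  proof (rule keyboard_decision_mono)
    show "0 < d1 + d2"
      using assms(3,4) by simp
    show "0 \<le> (\<Sum>i<n. if obs i then x i else 0)"
      using assms(5) by (intro sum_nonneg) auto
    show "0 \<le> (\<Sum>i<n. if obs i then 1 - x i else w i)"
      using assms(5,6) by (intro sum_nonneg) auto
    show "(\<Sum>i<n. if obs i then 1 - x i else w i) \<le> (\<Sum>i<n. if obs i then 1 - x i else 1)"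
      using assms(6) by (intro sum_mono) auto
  qed
qed

end
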